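(* Let $p\in(1,\infty)$ and let $\mu,\nu$ be Radon measures on $\mathbb{R}^N$ without common atoms. Assume that a kernel $K\in L^2_{\mathrm{loc}}(\mu\times\nu)$ is restrictedly $L^p$ bounded with restricted norm $C$. Then the integral operator $T$, $Tf(s)=\int K(s,t)f(t)\,d\mu(t)$ (defined for bounded compactly supported Borel $f$), is a bounded operator $L^p(\mu)\to L^p(\nu)$ with norm at most $2C$.
   Context: A kernel $K$ on $\mathbb{R}^N\times\mathbb{R}^N$ is restrictedly $L^p$ bounded (as a formal operator $L^p(\mu)\to L^p(\nu)$) if $\left|\int K(s,t)f(t)g(s)\,d\mu(t)\,d\nu(s)\right|\le C\|f\|_{L^p(\mu)}\|g\|_{L^{p'}(\nu)}$, $1/p+1/p'=1$, for all bounded Borel $f,g$ with compact supports satisfying $\operatorname{dist}(\operatorname{supp}f,\operatorname{supp}g)>0$; the least such $C$ is the restricted norm of $K$. *)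

theory Defs
  imports "HOL-Analysis.Analysis"
begin

definition fsupp :: "('a::topological_space \<Rightarrow> real) \<Rightarrow> 'a set" where
  "fsupp f = closure {x. f x \<noteq> 0}"

definition radon :: "'a::euclidean_space measure \<Rightarrow> bool" where
  "radon M \<longleftrightarrow> sets M = sets borel \<and> (\<forall>S. compact S \<longrightarrow> emeasure M S < \<infinity>)"

definition test_fun :: "('a::euclidean_space \<Rightarrow> real) \<Rightarrow> bool" where
  "test_fun f \<longleftrightarrow> f \<in> borel_measurable borel \<and> bounded (range f) \<and> compact (fsupp f)"

text \<open>L^p norm (for the functions used here, which are p-integrable).\<close>
definition Lp_norm :: "'a measure \<Rightarrow> real \<Rightarrow> ('a \<Rightarrow> real) \<Rightarrow> real" where
  "Lp_norm M p f = (LINT x|M. \<bar>f x\<bar> powr p) powr (1/p)"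

text \<open>K(s,t), s in the target (nu) variable, t in the source (mu) variable, is in L^2_loc(mu x nu).\<close>
definition L2_loc :: "'a::euclidean_space measure \<Rightarrow> 'a measure \<Rightarrow> ('a \<Rightarrow> 'a \<Rightarrow> real) \<Rightarrow> bool" where
  "L2_loc \<nu> \<mu> K \<longleftrightarrow> (\<lambda>z. K (fst z) (snd z)) \<in> borel_measurable (\<nu> \<Otimes>\<^sub>M \<mu>) \<and>
     (\<forall>S. compact S \<longrightarrow>
        (\<integral>\<^sup>+ z. ennreal ((K (fst z) (snd z))\<^sup>2) * indicator S z \<partial>(\<nu> \<Otimes>\<^sub>M \<mu>)) < \<infinity>)"

definition restr_bounded ::
  "real \<Rightarrow> 'a::euclidean_space measure \<Rightarrow> 'a measure \<Rightarrow> ('a \<Rightarrow> 'a \<Rightarrow> real) \<Rightarrow> real \<Rightarrow> bool" where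
  "restr_bounded p \<mu> \<nu> K C \<longleftrightarrow>
    (\<forall>f g. test_fun f \<longrightarrow> test_fun g \<longrightarrow>
       (\<exists>\<delta>>0. \<forall>x\<in>fsupp f. \<forall>y\<in>fsupp g. dist x y \<ge> \<delta>) \<longrightarrow>
       \<bar>LINT z|(\<nu> \<Otimes>\<^sub>M \<mu>). K (fst z) (snd z) * f (snd z) * g (fst z)\<bar>
         \<le> C * Lp_norm \<mu> p f * Lp_norm \<nu> (p / (p - 1)) g)"

definition int_op :: "'a measure \<Rightarrow> ('b \<Rightarrow> 'a \<Rightarrow> real) \<Rightarrow> ('a \<Rightarrow> real) \<Rightarrow> 'b \<Rightarrow> real" where
  "int_op \<mu> K f s = (LINT t|\<mu>. K s t * f t)"

end

theory Submission
  imports Defs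
begin

text \<open>The restricted bound only controls the pairing \<open>\<integral>\<integral> K(s,t) f(t) g(s)\<close> when the supports of
  \<open>f\<close> and \<open>g\<close> are separated. Cut space into a grid of cubes of side \<open>e\<close> and split the finitely
  many relevant cubes into two families \<open>S\<close> and its complement; the parts of \<open>f\<close> on the
  cubes of \<open>S\<close> and of \<open>g\<close> on the others have separated supports once thin layers along
  the cube faces are removed, so in the limit the restricted bound applies to them. Averaging
  over all splittings, a pair of distinct cubes is separated in a quarter of them and a single
  cube lies on a given side in half of them, so Hoelder's inequality for the sum over the
  splittings bounds the pairing restricted to pairs of distinct cubes by
  \<open>2 C \<parallel>f\<parallel>\<^sub>p \<parallel>g\<parallel>\<^sub>p\<^sub>'\<close>. As \<open>e \<rightarrow> 0\<close> these pairs exhaust the complement of the diagonal, which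
  is null for \<open>\<nu> \<times> \<mu>\<close> because \<open>\<mu>\<close> and \<open>\<nu>\<close> have no common atoms; duality then gives
  \<open>\<parallel>T f\<parallel>\<^sub>p \<le> 2 C \<parallel>f\<parallel>\<^sub>p\<close>.\<close>

section \<open>Radon measures\<close>

lemma radon_sets: "radon M \<Longrightarrow> sets M = sets borel"
  by (simp add: radon_def)

lemma radon_space: "radon M \<Longrightarrow> space M = UNIV"
  using sets_eq_imp_space_eq[of M borel] by (simp add: radon_def)

lemma borel_measurable_radon: "radon M \<Longrightarrow> f \<in> borel_measurable borel \<Longrightarrow> f \<in> borel_measurable M"
  by (simp add: measurable_cong_sets[OF radon_sets refl])

lemma emeasure_radon_compact_finite: "radon M \<Longrightarrow> compact S \<Longrightarrow> emeasure M S < \<infinity>"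
  by (simp add: radon_def)

lemma sigma_finite_radon:
  fixes M :: "'a::euclidean_space measure"
  assumes "radon M"
  shows "sigma_finite_measure M"
proof
  let ?B = "range (\<lambda>n::nat. cball (0::'a) (real n))"
  have fin: "emeasure M (cball 0 r) \<noteq> \<infinity>" for r
    using emeasure_radon_compact_finite[OF assms compact_cball, of 0 r] by (simp only: less_top)
  show "\<exists>A. countable A \<and> A \<subseteq> sets M \<and> \<Union> A = space M \<and> (\<forall>a\<in>A. emeasure M a \<noteq> \<infinity>)"
  proof (intro exI[of _ ?B] conjI)
    show "?B \<subseteq> sets M" unfolding radon_sets[OF assms] by auto
    have "x \<in> \<Union> ?B" for x
      using real_arch_simple[of "norm x"] by (auto simp: dist_norm)
    then show "\<Union> ?B = space M"
      using radon_space[OF assms] by blast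
    show "\<forall>a\<in>?B. emeasure M a \<noteq> \<infinity>" using fin by auto
  qed simp
qed

lemma sets_pair_radon:
  fixes M N :: "'a::euclidean_space measure"
  assumes "radon M" "radon N"
  shows "sets (N \<Otimes>\<^sub>M M) = sets borel"
  using sets_pair_measure_cong[OF radon_sets[OF assms(2)] radon_sets[OF assms(1)]]
  by (metis borel_prod)

lemma emeasure_pair_radon_compact_finite:
  fixes M N :: "'a::euclidean_space measure"
  assumes M: "radon M" and N: "radon N" and S: "compact S"
  shows "emeasure (N \<Otimes>\<^sub>M M) S < \<infinity>"
proof -
  have c: "compact (fst ` S)" "compact (snd ` S)"
    using compact_continuous_image[OF continuous_on_fst[OF continuous_on_id] S]
      compact_continuous_image[OF continuous_on_snd[OF continuous_on_id] S] .
  have "emeasure (N \<Otimes>\<^sub>M M) S \<le> emeasure (N \<Otimes>\<^sub>M M) (fst ` S \<times> snd ` S)"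
    using c by (intro emeasure_mono subset_fst_snd)
      (simp add: sets_pair_radon[OF M N] borel_compact compact_Times)
  also have "\<dots> = emeasure N (fst ` S) * emeasure M (snd ` S)"
    using c by (intro sigma_finite_measure.emeasure_pair_measure_Times sigma_finite_radon M)
      (simp_all add: radon_sets[OF M] radon_sets[OF N] borel_compact)
  also have "\<dots> < \<infinity>"
    using emeasure_radon_compact_finite[OF N c(1)] emeasure_radon_compact_finite[OF M c(2)]
    by (simp add: ennreal_mult_less_top)
  finally show ?thesis .
qed

lemma countable_atoms_radon:
  fixes M :: "'a::euclidean_space measure"
  assumes M: "radon M"
  shows "countable {x. emeasure M {x} \<noteq> 0}"
proof -
  let ?M = "\<lambda>n::nat. restrict_space M (cball 0 (real n))"
  have ball_sets: "cball 0 (real n) \<inter> space M \<in> sets M" for n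
    using radon_sets[OF M] radon_space[OF M] by simp
  have "finite_measure (?M n)" for n
    using ball_sets emeasure_radon_compact_finite[OF M, of "cball 0 (real n)"]
    by (intro finite_measureI) (simp add: emeasure_restrict_space space_restrict_space radon_space[OF M])
  then have "countable (\<Union>n. {x. measure (?M n) {x} \<noteq> 0})"
    by (intro countable_UN finite_measure.countable_support) auto
  moreover have "{x. emeasure M {x} \<noteq> 0} \<subseteq> (\<Union>n. {x. measure (?M n) {x} \<noteq> 0})"
  proof
    fix x assume "x \<in> {x. emeasure M {x} \<noteq> 0}"
    moreover have "emeasure M {x} \<noteq> \<infinity>"
      using emeasure_radon_compact_finite[OF M compact_sing, of x] by simp
    ultimately have x: "measure M {x} \<noteq> 0"
      by (simp add: measure_def enn2real_eq_0_iff)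
    obtain n :: nat where "norm x \<le> real n"
      using real_arch_simple by blast
    then have "measure (?M n) {x} = measure M {x}"
      by (intro measure_restrict_space[OF ball_sets]) (simp add: dist_norm)
    with x have "measure (?M n) {x} \<noteq> 0" by simp
    then show "x \<in> (\<Union>n. {x. measure (?M n) {x} \<noteq> 0})" by blast
  qed
  ultimately show ?thesis by (rule countable_subset[rotated])
qed

lemma sets_diagonal_pair_radon:
  fixes M N :: "'a::euclidean_space measure"
  assumes "radon M" "radon N"
  shows "{z. fst z = snd z} \<in> sets (N \<Otimes>\<^sub>M M)"
  unfolding sets_pair_radon[OF assms]
  by (rule borel_closed, rule closed_Collect_eq) (intro continuous_intros)+

text \<open>Fubini reduces the diagonal to the atoms of \<open>\<mu>\<close>, a countable set that is \<open>\<nu>\<close>-null.\<close>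
lemma diagonal_null_sets_pair_radon:
  fixes \<mu> \<nu> :: "'a::euclidean_space measure"
  assumes \<mu>: "radon \<mu>" and \<nu>: "radon \<nu>"
    and atoms: "\<forall>x. emeasure \<mu> {x} = 0 \<or> emeasure \<nu> {x} = 0"
  shows "{z. fst z = snd z} \<in> null_sets (\<nu> \<Otimes>\<^sub>M \<mu>)"
proof -
  define P where "P = {x. emeasure \<mu> {x} \<noteq> 0}"
  have P: "countable P" unfolding P_def by (rule countable_atoms_radon[OF \<mu>])
  have "emeasure \<nu> P = (\<integral>\<^sup>+x. emeasure \<nu> {x} \<partial>count_space P)"
    by (rule emeasure_countable_singleton[OF _ P]) (simp add: radon_sets[OF \<nu>])
  also have "\<dots> = (\<integral>\<^sup>+x. 0 \<partial>count_space P)"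
    by (rule nn_integral_cong) (use atoms in \<open>auto simp: P_def\<close>)
  finally have "P \<in> null_sets \<nu>"
    using sets.countable[OF _ P, of \<nu>] by (simp add: null_sets_def radon_sets[OF \<nu>])
  then have ae: "AE s in \<nu>. emeasure \<mu> {s} = 0"
    by (rule AE_I') (auto simp: P_def)
  have D: "{z. fst z = snd z} \<in> sets (\<nu> \<Otimes>\<^sub>M \<mu>)"
    by (rule sets_diagonal_pair_radon[OF \<mu> \<nu>])
  have "emeasure (\<nu> \<Otimes>\<^sub>M \<mu>) {z. fst z = snd z} = (\<integral>\<^sup>+s. emeasure \<mu> (Pair s -` {z. fst z = snd z}) \<partial>\<nu>)"
    by (rule sigma_finite_measure.emeasure_pair_measure_alt[OF sigma_finite_radon[OF \<mu>] D])
  also have "\<dots> = (\<integral>\<^sup>+s. emeasure \<mu> {s} \<partial>\<nu>)"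
    by (rule nn_integral_cong) (simp add: vimage_def)
  also have "\<dots> = (\<integral>\<^sup>+s. 0 \<partial>\<nu>)"
    by (rule nn_integral_cong_AE[OF ae])
  finally show ?thesis using D by (simp add: null_sets_def)
qed

lemma nn_integral_le_if_truncations_le:
  fixes h :: "'a \<Rightarrow> ennreal"
  assumes E: "incseq E" "\<And>x. \<exists>n. x \<in> E n" "\<And>n. E n \<in> sets M"
    and h: "h \<in> borel_measurable M"
    and le: "\<And>n. (\<integral>\<^sup>+x. h x * indicator (E n) x \<partial>M) \<le> B"
  shows "integral\<^sup>N M h \<le> B"
proof -
  have inc: "incseq (\<lambda>n x. h x * indicator (E n) x)"
    using E(1) by (intro incseq_SucI le_funI mult_left_mono) (auto simp: incseq_Suc_iff indicator_def)
  have "h x = (SUP n. h x * indicator (E n) x)" for x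
  proof (rule antisym)
    obtain n where "x \<in> E n" using E(2) by blast
    then show "h x \<le> (SUP n. h x * indicator (E n) x)"
      by (intro SUP_upper2[of n]) simp_all
    show "(SUP n. h x * indicator (E n) x) \<le> h x"
      by (intro SUP_least) (simp add: indicator_def)
  qed
  then have "integral\<^sup>N M h = (\<integral>\<^sup>+x. (SUP n. h x * indicator (E n) x) \<partial>M)"
    by simp
  also have "\<dots> = (SUP n. \<integral>\<^sup>+x. h x * indicator (E n) x \<partial>M)"
    using inc h E(3) by (intro nn_integral_monotone_convergence_SUP) auto
  also have "\<dots> \<le> B"
    by (intro SUP_least le)
  finally show ?thesis .
qed

section \<open>Test functions and \<open>L\<^sup>p\<close> norms\<close>

lemma nonzero_in_fsupp: "f x \<noteq> 0 \<Longrightarrow> x \<in> fsupp f"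
  unfolding fsupp_def by (rule subsetD[OF closure_subset]) simp

lemma fsupp_mult_indicator_subset: "fsupp (\<lambda>t. h t * indicator D t) \<subseteq> closure D"
  unfolding fsupp_def by (rule closure_mono) (auto simp: indicator_def)

lemma test_fun_bounded: "test_fun f \<Longrightarrow> \<exists>B\<ge>0. \<forall>x. \<bar>f x\<bar> \<le> B"
  unfolding test_fun_def bounded_iff by (metis abs_ge_zero order_trans rangeI real_norm_def)

lemma test_fun_mult_indicator:
  assumes f: "test_fun f" and A: "A \<in> sets borel"
  shows "test_fun (\<lambda>t. f t * indicator A t)"
  unfolding test_fun_def
proof (intro conjI)
  show "(\<lambda>t. f t * indicator A t) \<in> borel_measurable borel"
    using f A by (intro borel_measurable_times borel_measurable_indicator) (simp_all add: test_fun_def)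
  obtain B where "B \<ge> 0" "\<forall>x. \<bar>f x\<bar> \<le> B" using test_fun_bounded[OF f] by blast
  then have "\<bar>f x * indicator A x\<bar> \<le> B" for x
    by (simp add: indicator_def)
  then show "bounded (range (\<lambda>t. f t * indicator A t))"
    unfolding bounded_iff by (intro exI[of _ B]) auto
  have "fsupp (\<lambda>t. f t * indicator A t) \<subseteq> fsupp f"
    unfolding fsupp_def by (rule closure_mono) auto
  then have "fsupp (\<lambda>t. f t * indicator A t) = fsupp f \<inter> fsupp (\<lambda>t. f t * indicator A t)"
    by blast
  also have "compact \<dots>"
    using f by (intro compact_Int_closed) (simp_all add: test_fun_def fsupp_def)
  finally show "compact (fsupp (\<lambda>t. f t * indicator A t))" .
qed

lemma test_fun_mult_indicator_bounded:
  assumes u: "u \<in> borel_measurable borel" and E: "E \<in> sets borel" "bounded E"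
    and u_le: "\<And>s. s \<in> E \<Longrightarrow> \<bar>u s\<bar> \<le> M"
  shows "test_fun (\<lambda>s. u s * indicator E s)"
  unfolding test_fun_def
proof (intro conjI)
  show "(\<lambda>s. u s * indicator E s) \<in> borel_measurable borel"
    using u E by measurable
  have "\<bar>u s * indicator E s\<bar> \<le> \<bar>M\<bar>" for s
    using u_le[of s] by (auto simp: indicator_def)
  then show "bounded (range (\<lambda>s. u s * indicator E s))"
    unfolding bounded_iff by (intro exI[of _ "\<bar>M\<bar>"]) auto
  have "fsupp (\<lambda>s. u s * indicator E s) \<subseteq> closure E"
    by (rule fsupp_mult_indicator_subset)
  then show "compact (fsupp (\<lambda>s. u s * indicator E s))"
    using bounded_closure[OF E(2)] by (auto simp: compact_eq_bounded_closed fsupp_def intro: bounded_subset)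
qed

lemma integrable_test_fun_powr:
  assumes M: "radon M" and h: "test_fun h" and r: "0 < r"
  shows "integrable M (\<lambda>x. \<bar>h x\<bar> powr r)"
proof -
  obtain B where B: "\<And>x. \<bar>h x\<bar> \<le> B" using test_fun_bounded[OF h] by blast
  have S: "compact (fsupp h)" using h by (simp add: test_fun_def)
  have "integrable M (\<lambda>x. B powr r * indicator (fsupp h) x :: real)"
    using S emeasure_radon_compact_finite[OF M S]
    by (intro integrable_mult_right integrable_real_indicator) (simp_all add: radon_sets[OF M] borel_compact)
  then show ?thesis
  proof (rule Bochner_Integration.integrable_bound)
    have "h \<in> borel_measurable M"
      using borel_measurable_radon[OF M] h unfolding test_fun_def by blast
    then show "(\<lambda>x. \<bar>h x\<bar> powr r) \<in> borel_measurable M" by measurable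
    have "\<bar>h x\<bar> powr r \<le> B powr r * indicator (fsupp h) x" for x
      using B[of x] r by (cases "h x = 0") (simp_all add: nonzero_in_fsupp powr_mono2)
    then show "AE x in M. norm (\<bar>h x\<bar> powr r) \<le> norm (B powr r * indicator (fsupp h) x :: real)"
      by (simp add: order_trans[OF _ abs_ge_self])
  qed
qed

lemma Lp_norm_nonneg: "0 \<le> Lp_norm M r h"
  unfolding Lp_norm_def by simp

lemma Lp_norm_powr: "0 < r \<Longrightarrow> Lp_norm M r h powr r = (LINT x|M. \<bar>h x\<bar> powr r)"
  unfolding Lp_norm_def by (simp add: powr_powr integral_nonneg_AE)

lemma Lp_norm_mono:
  assumes M: "radon M" and "test_fun h1" "test_fun h2" and r: "0 < r"
    and le: "\<And>x. \<bar>h1 x\<bar> \<le> \<bar>h2 x\<bar>"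
  shows "Lp_norm M r h1 \<le> Lp_norm M r h2"
  unfolding Lp_norm_def
proof (rule powr_mono2)
  show "0 \<le> 1 / r" using r by simp
  show "0 \<le> (LINT x|M. \<bar>h1 x\<bar> powr r)" by (rule integral_nonneg_AE) simp
  show "(LINT x|M. \<bar>h1 x\<bar> powr r) \<le> (LINT x|M. \<bar>h2 x\<bar> powr r)"
    using le r by (intro integral_mono integrable_test_fun_powr[OF M] assms powr_mono2) simp_all
qed

lemma sum_Lp_norm_powr_mult_indicator:
  assumes M: "radon M" and h: "test_fun h" and r: "0 < r" and P: "finite P"
    and D: "\<And>S. S \<in> P \<Longrightarrow> D S \<in> sets borel"
    and mult: "\<And>t. h t \<noteq> 0 \<Longrightarrow> (\<Sum>S\<in>P. indicator (D S) t) = c"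
  shows "(\<Sum>S\<in>P. Lp_norm M r (\<lambda>t. h t * indicator (D S) t) powr r) = c * (LINT t|M. \<bar>h t\<bar> powr r)"
proof -
  have eq: "\<bar>h t * indicator (D S) t\<bar> powr r = \<bar>h t\<bar> powr r * indicator (D S) t" for t S
    by (simp add: indicator_def)
  have "(\<Sum>S\<in>P. Lp_norm M r (\<lambda>t. h t * indicator (D S) t) powr r)
      = (LINT t|M. (\<Sum>S\<in>P. \<bar>h t\<bar> powr r * indicator (D S) t))"
    using integrable_test_fun_powr[OF M test_fun_mult_indicator[OF h D] r]
    by (simp add: Lp_norm_powr[OF r] eq)
  also have "\<dots> = (LINT t|M. c * \<bar>h t\<bar> powr r)"
  proof (rule Bochner_Integration.integral_cong)
    show "(\<Sum>S\<in>P. \<bar>h t\<bar> powr r * indicator (D S) t) = c * \<bar>h t\<bar> powr r" for t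
      using mult[of t] by (cases "h t = 0") (simp_all add: sum_distrib_left[symmetric])
  qed simp
  finally show ?thesis by simp
qed

lemma Holder_inequality_sum:
  fixes a b :: "'i \<Rightarrow> real"
  assumes X: "finite X" and a: "\<And>x. 0 \<le> a x" and b: "\<And>x. 0 \<le> b x"
    and p: "1 < p" and q: "1 < q" and pq: "1 / p + 1 / q = 1"
  shows "(\<Sum>x\<in>X. a x * b x) \<le> (\<Sum>x\<in>X. a x powr p) powr (1/p) * (\<Sum>x\<in>X. b x powr q) powr (1/q)"
proof -
  define A where "A = (\<Sum>x\<in>X. a x powr p)"
  define B where "B = (\<Sum>x\<in>X. b x powr q)"
  have vanish: "c x = 0" if "(\<Sum>x\<in>X. c x powr r) = 0" "x \<in> X" for c :: "'i \<Rightarrow> real" and r x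
    using that X by (simp add: sum_nonneg_eq_0_iff)
  consider "A = 0" | "B = 0" | "0 < A" "0 < B"
    unfolding A_def B_def by (metis sum_nonneg powr_ge_zero order_neq_le_trans)
  then show ?thesis
  proof cases
    case 1
    then show ?thesis by (simp add: A_def vanish[of a p])
  next
    case 2
    then show ?thesis by (simp add: B_def vanish[of b q])
  next
    case 3
    define \<alpha> where "\<alpha> = A powr (1/p)"
    define \<beta> where "\<beta> = B powr (1/q)"
    have pos: "0 < \<alpha>" "0 < \<beta>" using 3 by (simp_all add: \<alpha>_def \<beta>_def)
    have "\<alpha> powr p = A" "\<beta> powr q = B"
      using 3 p q by (simp_all add: \<alpha>_def \<beta>_def powr_powr)
    then have "(\<Sum>x\<in>X. (a x / \<alpha>) powr p / p + (b x / \<beta>) powr q / q) = A / A / p + B / B / q"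
      using a b pos by (simp add: powr_divide sum.distrib sum_divide_distrib[symmetric] A_def B_def)
    also have "\<dots> = 1" using 3 pq by simp
    finally have "(\<Sum>x\<in>X. (a x / \<alpha>) * (b x / \<beta>)) \<le> 1"
      using Youngs_inequality[OF p q pq] a b pos
      by (metis (no_types, lifting) divide_nonneg_pos sum_mono)
    then show ?thesis
      using pos by (simp add: sum_divide_distrib[symmetric] \<alpha>_def \<beta>_def A_def B_def)
  qed
qed

lemma mult_sgn_abs_powr: "(x::real) * (sgn x * \<bar>x\<bar> powr (p - 1)) = \<bar>x\<bar> powr p"
proof (cases "x = 0")
  case False
  then have "\<bar>x\<bar> * \<bar>x\<bar> powr (p - 1) = \<bar>x\<bar> powr p"
    by (simp add: powr_mult_base)
  then show ?thesis by (simp add: mult.assoc[symmetric] abs_sgn mult.commute)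
qed simp

lemma le_powr_if_le_mult_powr:
  fixes J B p q :: real
  assumes p: "1 < p" and pq: "1 / p + 1 / q = 1" and J: "0 \<le> J"
    and le: "J \<le> B * J powr (1 / q)"
  shows "J \<le> B powr p"
proof (cases "J = 0")
  case False
  with J have "J powr (1 / p) * J powr (1 / q) = J"
    using pq by (simp add: powr_add[symmetric])
  with le False J have "J powr (1 / p) \<le> B"
    by (metis mult_le_cancel_right powr_gt_zero less_le_not_le)
  then have "(J powr (1 / p)) powr p \<le> B powr p"
    using p by (intro powr_mono2) simp_all
  with False J p show ?thesis
    by (simp add: powr_powr)
qed simp

lemma powr_conjugate_mult:
  fixes a F G p q :: real
  assumes "0 \<le> a" "0 \<le> F" "0 \<le> G" and pq: "1 / p + 1 / q = 1"
  shows "(a * F) powr (1 / p) * (a * G) powr (1 / q) = a * (F powr (1 / p) * G powr (1 / q))"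
proof -
  have "(a * F) powr (1 / p) * (a * G) powr (1 / q) = (a powr (1 / p) * a powr (1 / q)) * (F powr (1 / p) * G powr (1 / q))"
    using assms by (simp add: powr_mult ac_simps)
  also have "a powr (1 / p) * a powr (1 / q) = a"
    using pq \<open>0 \<le> a\<close> by (simp add: powr_add[symmetric])
  finally show ?thesis .
qed

lemma eventually_inverse_Suc_less: "0 < c \<Longrightarrow> eventually (\<lambda>n. 1 / real (Suc n) < c) sequentially"
  using order_tendstoD(2)[OF LIMSEQ_Suc[OF lim_1_over_n]] by simp

lemma dist_closure_ge:
  fixes A B :: "'a::metric_space set"
  assumes "\<And>x y. x \<in> A \<Longrightarrow> y \<in> B \<Longrightarrow> d \<le> dist x y" and "x \<in> closure A" "y \<in> closure B"
  shows "d \<le> dist x y"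
proof -
  have "A \<noteq> {}" "B \<noteq> {}" using assms(2,3) by auto
  then have "d \<le> setdist A B" by (rule le_setdistI) (rule assms(1))
  also have "\<dots> = setdist (closure A) (closure B)" by simp
  also have "\<dots> \<le> dist x y" using assms(2,3) by (rule setdist_le_dist)
  finally show ?thesis .
qed

section \<open>A grid of cubes\<close>

text \<open>\<open>grid_cell e x\<close> is the integer vector \<open>k\<close> such that \<open>x\<close> lies in the half-open cube
  \<open>e k + [0, e)\<^sup>N\<close>; \<open>cell_core e h\<close> consists of the points at relative distance at least
  \<open>h\<close> from the upper faces of their cube.\<close>
definition grid_cell :: "real \<Rightarrow> 'a::euclidean_space \<Rightarrow> 'a" where
  "grid_cell e x = (\<Sum>b\<in>Basis. real_of_int \<lfloor>(x \<bullet> b) / e\<rfloor> *\<^sub>R b)"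

definition cell_core :: "real \<Rightarrow> real \<Rightarrow> 'a::euclidean_space set" where
  "cell_core e h = {x. \<forall>b\<in>Basis. (x \<bullet> b) / e - real_of_int \<lfloor>(x \<bullet> b) / e\<rfloor> \<le> 1 - h}"

lemma grid_cell_eq_iff:
  "grid_cell e x = grid_cell e y \<longleftrightarrow> (\<forall>b\<in>Basis. \<lfloor>(x \<bullet> b) / e\<rfloor> = \<lfloor>(y \<bullet> b) / e\<rfloor>)"
proof -
  have "grid_cell e x \<bullet> b = real_of_int \<lfloor>(x \<bullet> b) / e\<rfloor>" if "b \<in> Basis" for x b
    unfolding grid_cell_def using that by (rule inner_sum_left_Basis)
  then show ?thesis
    by (metis (no_types, lifting) euclidean_eqI of_int_eq_iff)
qed

lemma borel_measurable_grid_cell [measurable]: "grid_cell e \<in> borel_measurable borel"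
  unfolding grid_cell_def by measurable

lemma borel_finite: "finite (S :: 'a::t1_space set) \<Longrightarrow> S \<in> sets borel"
  by (intro borel_closed finite_imp_closed)

lemma sets_vimage_grid_cell: "S \<in> sets borel \<Longrightarrow> grid_cell e -` S \<in> sets borel"
  using measurable_sets_borel[OF borel_measurable_grid_cell] by (metis inf_top.right_neutral space_borel)

lemma sets_cell_core [measurable]: "cell_core e h \<in> sets borel"
  unfolding cell_core_def by measurable

lemma dist_ge_cell_core:
  assumes e: "0 < e" and x: "x \<in> cell_core e h" and y: "y \<in> cell_core e h"
    and ne: "grid_cell e x \<noteq> grid_cell e y"
  shows "e * h \<le> dist x y"
proof -
  obtain b where b: "b \<in> Basis" and neq: "\<lfloor>(x \<bullet> b) / e\<rfloor> \<noteq> \<lfloor>(y \<bullet> b) / e\<rfloor>"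
    using ne grid_cell_eq_iff by blast
  have gap: "h \<le> v - u" if "u - real_of_int \<lfloor>u\<rfloor> \<le> 1 - h" "\<lfloor>u\<rfloor> < \<lfloor>v\<rfloor>" for u v :: real
    using that of_int_floor_le[of v] by linarith
  have "(x \<bullet> b) / e - real_of_int \<lfloor>(x \<bullet> b) / e\<rfloor> \<le> 1 - h"
    "(y \<bullet> b) / e - real_of_int \<lfloor>(y \<bullet> b) / e\<rfloor> \<le> 1 - h"
    using x y b by (simp_all add: cell_core_def)
  with neq have "h \<le> \<bar>(x \<bullet> b) / e - (y \<bullet> b) / e\<bar>"
    using gap[of "(x \<bullet> b) / e" "(y \<bullet> b) / e"] gap[of "(y \<bullet> b) / e" "(x \<bullet> b) / e"]
    by (cases "\<lfloor>(x \<bullet> b) / e\<rfloor> < \<lfloor>(y \<bullet> b) / e\<rfloor>") auto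
  also have "\<dots> = \<bar>(x - y) \<bullet> b\<bar> / e"
    using e by (simp add: inner_diff_left diff_divide_distrib[symmetric])
  finally have "e * h \<le> \<bar>(x - y) \<bullet> b\<bar>" using e by (simp add: field_simps)
  also have "\<dots> \<le> dist x y" using Basis_le_norm[OF b] by (simp add: dist_norm)
  finally show ?thesis .
qed

lemma eventually_in_cell_core: "eventually (\<lambda>n. x \<in> cell_core e (1 / real (Suc n))) sequentially"
proof -
  have "eventually (\<lambda>n. (x \<bullet> b) / e - real_of_int \<lfloor>(x \<bullet> b) / e\<rfloor> \<le> 1 - 1 / real (Suc n)) sequentially"
    for b
  proof -
    have "0 < 1 - ((x \<bullet> b) / e - real_of_int \<lfloor>(x \<bullet> b) / e\<rfloor>)" by linarith
    from eventually_inverse_Suc_less[OF this] show ?thesis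
      by (rule eventually_mono) linarith
  qed
  then show ?thesis
    unfolding cell_core_def by (simp add: eventually_ball_finite)
qed

lemma inner_diff_less_if_grid_cell_eq:
  assumes e: "0 < e" and eq: "grid_cell e x = grid_cell e y" and b: "b \<in> Basis"
  shows "\<bar>x \<bullet> b - y \<bullet> b\<bar> < e"
proof -
  have "\<lfloor>(x \<bullet> b) / e\<rfloor> = \<lfloor>(y \<bullet> b) / e\<rfloor>"
    using eq b by (simp add: grid_cell_eq_iff)
  then have "\<bar>(x \<bullet> b) / e - (y \<bullet> b) / e\<bar> < 1"
    by linarith
  then show ?thesis
    using e by (simp add: diff_divide_distrib[symmetric] abs_divide)
qed

lemma eventually_grid_cell_neq:
  assumes "x \<noteq> y"
  shows "eventually (\<lambda>n. grid_cell (1 / real (Suc n)) x \<noteq> grid_cell (1 / real (Suc n)) y) sequentially"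
proof -
  obtain b where b: "b \<in> Basis" and "x \<bullet> b \<noteq> y \<bullet> b"
    using assms euclidean_eqI by blast
  then have "eventually (\<lambda>n. 1 / real (Suc n) < \<bar>x \<bullet> b - y \<bullet> b\<bar>) sequentially"
    by (intro eventually_inverse_Suc_less) simp
  then show ?thesis
  proof (rule eventually_mono)
    fix n assume less: "1 / real (Suc n) < \<bar>x \<bullet> b - y \<bullet> b\<bar>"
    show "grid_cell (1 / real (Suc n)) x \<noteq> grid_cell (1 / real (Suc n)) y"
    proof
      assume "grid_cell (1 / real (Suc n)) x = grid_cell (1 / real (Suc n)) y"
      then have "\<bar>x \<bullet> b - y \<bullet> b\<bar> < 1 / real (Suc n)"
        by (rule inner_diff_less_if_grid_cell_eq[rotated]) (simp_all add: b)
      with less show False by simp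
    qed
  qed
qed

lemma finite_image_grid_cell:
  assumes "bounded X"
  shows "finite (grid_cell e ` X)"
proof -
  obtain R where R: "\<And>x. x \<in> X \<Longrightarrow> norm x \<le> R" using assms bounded_iff by blast
  define M where "M = \<lceil>R / \<bar>e\<bar>\<rceil> + 1"
  define vec where "vec k = (\<Sum>b\<in>Basis. real_of_int (k b) *\<^sub>R b :: 'a)" for k :: "'a \<Rightarrow> int"
  have "grid_cell e x \<in> vec ` (Basis \<rightarrow>\<^sub>E {-M..M})" if x: "x \<in> X" for x
  proof
    show "grid_cell e x = vec (restrict (\<lambda>b. \<lfloor>(x \<bullet> b) / e\<rfloor>) Basis)"
      unfolding grid_cell_def vec_def by (intro sum.cong) simp_all
    have "\<lfloor>(x \<bullet> b) / e\<rfloor> \<in> {-M..M}" if b: "b \<in> Basis" for b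
    proof -
      have "\<bar>x \<bullet> b\<bar> \<le> R" using Basis_le_norm[OF b, of x] R[OF x] by linarith
      then have "\<bar>(x \<bullet> b) / e\<bar> \<le> R / \<bar>e\<bar>"
        by (simp add: abs_divide divide_right_mono)
      then have "- (R / \<bar>e\<bar>) \<le> (x \<bullet> b) / e" "(x \<bullet> b) / e \<le> R / \<bar>e\<bar>"
        by linarith+
      then show ?thesis unfolding M_def by simp linarith
    qed
    then show "restrict (\<lambda>b. \<lfloor>(x \<bullet> b) / e\<rfloor>) Basis \<in> Basis \<rightarrow>\<^sub>E {-M..M}" by simp
  qed
  then have "grid_cell e ` X \<subseteq> vec ` (Basis \<rightarrow>\<^sub>E {-M..M})" by blast
  then show ?thesis by (rule finite_subset) (intro finite_imageI finite_PiE; simp)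
qed

lemma finite_grid_cells_test_fun:
  assumes "test_fun f" "test_fun g"
  shows "finite (grid_cell e ` (fsupp f \<union> fsupp g))"
  using assms unfolding test_fun_def
  by (intro finite_image_grid_cell bounded_Un[THEN iffD2] conjI compact_imp_bounded) auto

section \<open>Splittings of a finite set of cells\<close>

lemma card_Pow_not_mem:
  assumes "finite I" "i \<in> I"
  shows "2 * card {S \<in> Pow I. i \<notin> S} = 2 ^ card I"
proof -
  have "{S \<in> Pow I. i \<notin> S} = Pow (I - {i})" by auto
  moreover have "card I = Suc (card (I - {i}))"
    using assms by (metis card_Suc_Diff1)
  ultimately show ?thesis using assms by (simp only: card_Pow finite_Diff power_Suc)
qed

lemma card_Pow_mem:
  assumes "finite I" "i \<in> I"
  shows "2 * card {S \<in> Pow I. i \<in> S} = 2 ^ card I"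
proof -
  have "bij_betw (\<lambda>S. S - {i}) {S \<in> Pow I. i \<in> S} {S \<in> Pow I. i \<notin> S}"
    by (rule bij_betw_byWitness[where f' = "insert i"]) (use assms in auto)
  then show ?thesis
    using card_Pow_not_mem[OF assms] by (simp add: bij_betw_same_card)
qed

lemma card_Pow_mem_not_mem:
  assumes I: "finite I" and "i \<in> I" "j \<in> I" "i \<noteq> j"
  shows "4 * card {S \<in> Pow I. i \<in> S \<and> j \<notin> S} = 2 ^ card I"
proof -
  have "{S \<in> Pow I. i \<in> S \<and> j \<notin> S} = {S \<in> Pow (I - {j}). i \<in> S}" by auto
  moreover have "2 * card {S \<in> Pow (I - {j}). i \<in> S} = 2 ^ card (I - {j})"
    using assms by (intro card_Pow_mem) auto
  moreover have "card I = Suc (card (I - {j}))"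
    using assms by (metis card_Suc_Diff1)
  ultimately show ?thesis by simp
qed

lemma sum_indicator_vimage_Pow:
  assumes I: "finite I" and t: "h t \<in> I"
  shows "(\<Sum>S\<in>Pow I. indicator (h -` S) t) = (2 ^ card I / 2 :: real)"
    and "(\<Sum>S\<in>Pow I. indicator (h -` (- S)) t) = (2 ^ card I / 2 :: real)"
proof -
  have "real (2 * card {S \<in> Pow I. h t \<in> S}) = 2 ^ card I"
    "real (2 * card {S \<in> Pow I. h t \<notin> S}) = 2 ^ card I"
    using card_Pow_mem[OF I t] card_Pow_not_mem[OF I t] by simp_all
  then show "(\<Sum>S\<in>Pow I. indicator (h -` S) t) = (2 ^ card I / 2 :: real)"
    "(\<Sum>S\<in>Pow I. indicator (h -` (- S)) t) = (2 ^ card I / 2 :: real)"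
    using I by (simp_all add: indicator_def Int_def)
qed

lemma sum_indicator_vimage_Pow_split:
  assumes I: "finite I" and "h t \<in> I" "h s \<in> I"
  shows "(\<Sum>S\<in>Pow I. indicator (h -` S) t * indicator (h -` (- S)) s)
    = (2 ^ card I / 4 * of_bool (h s \<noteq> h t) :: real)"
proof -
  have "(\<Sum>S\<in>Pow I. indicator (h -` S) t * indicator (h -` (- S)) s)
      = real (card {S \<in> Pow I. h t \<in> S \<and> h s \<notin> S})"
    using I by (simp add: indicator_def Int_def)
  also have "\<dots> = 2 ^ card I / 4 * of_bool (h s \<noteq> h t)"
  proof (cases "h s = h t")
    case False
    then have "real (4 * card {S \<in> Pow I. h t \<in> S \<and> h s \<notin> S}) = 2 ^ card I"
      using card_Pow_mem_not_mem[OF I assms(2,3)] by simp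
    with False show ?thesis by simp
  qed simp
  finally show ?thesis .
qed

lemma sum_Lp_norm_powr_grid_split:
  assumes M: "radon M" and h: "test_fun h" and r: "0 < r" and I: "finite I"
    and hI: "\<And>t. h t \<noteq> 0 \<Longrightarrow> grid_cell e t \<in> I"
  shows "(\<Sum>S\<in>Pow I. Lp_norm M r (\<lambda>t. h t * indicator (grid_cell e -` S) t) powr r)
      = 2 ^ card I / 2 * (LINT t|M. \<bar>h t\<bar> powr r)"
    and "(\<Sum>S\<in>Pow I. Lp_norm M r (\<lambda>t. h t * indicator (grid_cell e -` (- S)) t) powr r)
      = 2 ^ card I / 2 * (LINT t|M. \<bar>h t\<bar> powr r)"
  using sum_indicator_vimage_Pow[where h = "grid_cell e", OF I hI] I
  by (intro sum_Lp_norm_powr_mult_indicator[OF M h r] finite_Pow_iff[THEN iffD2] I;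
      auto intro: sets_vimage_grid_cell borel_comp borel_finite finite_subset)+

section \<open>Locally square integrable kernels\<close>

locale L2_loc_kernel =
  fixes \<mu> \<nu> :: "'a::euclidean_space measure" and K :: "'a \<Rightarrow> 'a \<Rightarrow> real"
  assumes radon_\<mu>: "radon \<mu>" and radon_\<nu>: "radon \<nu>" and L2_loc: "L2_loc \<nu> \<mu> K"
begin

sublocale pair_sigma_finite \<nu> \<mu>
  by (simp add: pair_sigma_finite_def sigma_finite_radon radon_\<mu> radon_\<nu>)

lemma borel_measurable_kernel [measurable]:
  "(\<lambda>z. K (fst z) (snd z)) \<in> borel_measurable (\<nu> \<Otimes>\<^sub>M \<mu>)"
  using L2_loc by (simp add: L2_loc_def)

lemma borel_measurable_test_fun:
  "test_fun f \<Longrightarrow> f \<in> borel_measurable \<mu>" "test_fun f \<Longrightarrow> f \<in> borel_measurable \<nu>"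
  by (simp_all add: test_fun_def borel_measurable_radon radon_\<mu> radon_\<nu>)

abbreviation kernel_pairing :: "('a \<Rightarrow> real) \<Rightarrow> ('a \<Rightarrow> real) \<Rightarrow> ('a \<times> 'a \<Rightarrow> real) \<Rightarrow> real" where
  "kernel_pairing f g \<phi> \<equiv> \<integral>z. K (fst z) (snd z) * f (snd z) * g (fst z) * \<phi> z \<partial>(\<nu> \<Otimes>\<^sub>M \<mu>)"

lemma integrable_kernel_square_compact:
  assumes S: "compact S"
  shows "integrable (\<nu> \<Otimes>\<^sub>M \<mu>) (\<lambda>z. (1 + (K (fst z) (snd z))\<^sup>2) * indicator S z)"
proof -
  have S_sets: "S \<in> sets (\<nu> \<Otimes>\<^sub>M \<mu>)"
    unfolding sets_pair_radon[OF radon_\<mu> radon_\<nu>] by (rule borel_compact[OF S])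
  have "(\<integral>\<^sup>+ z. ennreal ((K (fst z) (snd z))\<^sup>2) * indicator S z \<partial>(\<nu> \<Otimes>\<^sub>M \<mu>)) < \<infinity>"
    using L2_loc S unfolding L2_loc_def by blast
  then have "integrable (\<nu> \<Otimes>\<^sub>M \<mu>) (\<lambda>z. (K (fst z) (snd z))\<^sup>2 * indicator S z :: real)"
    using S_sets by (intro integrableI_nonneg) (simp_all add: indicator_mult_ennreal mult_ac)
  moreover have "integrable (\<nu> \<Otimes>\<^sub>M \<mu>) (indicator S :: _ \<Rightarrow> real)"
    using S_sets emeasure_pair_radon_compact_finite[OF radon_\<mu> radon_\<nu> S]
    by (simp add: integrable_real_indicator)
  ultimately show ?thesis
    by (simp add: distrib_right)
qed

text \<open>On \<open>fsupp g \<times> fsupp f\<close> the integrand is dominated by a multiple of \<open>1 + K\<^sup>2\<close>.\<close>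
lemma integrable_kernel_pairing:
  assumes f: "test_fun f" and g: "test_fun g" and \<phi>: "\<phi> \<in> borel_measurable (\<nu> \<Otimes>\<^sub>M \<mu>)"
    and \<phi>_le: "\<And>z. \<bar>\<phi> z\<bar> \<le> 1"
  shows "integrable (\<nu> \<Otimes>\<^sub>M \<mu>) (\<lambda>z. K (fst z) (snd z) * f (snd z) * g (fst z) * \<phi> z)"
proof -
  obtain Bf Bg where Bf: "0 \<le> Bf" "\<And>x. \<bar>f x\<bar> \<le> Bf" and Bg: "0 \<le> Bg" "\<And>x. \<bar>g x\<bar> \<le> Bg"
    using test_fun_bounded[OF f] test_fun_bounded[OF g] by blast
  define S where "S = fsupp g \<times> fsupp f"
  have "compact S"
    using f g by (simp add: S_def test_fun_def compact_Times)
  then have "integrable (\<nu> \<Otimes>\<^sub>M \<mu>) (\<lambda>z. Bf * Bg * ((1 + (K (fst z) (snd z))\<^sup>2) * indicator S z))"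
    by (intro integrable_mult_right integrable_kernel_square_compact)
  then show ?thesis
  proof (rule Bochner_Integration.integrable_bound)
    have [measurable]: "f \<in> borel_measurable \<mu>" "g \<in> borel_measurable \<nu>"
      using borel_measurable_test_fun f g by blast+
    show "(\<lambda>z. K (fst z) (snd z) * f (snd z) * g (fst z) * \<phi> z) \<in> borel_measurable (\<nu> \<Otimes>\<^sub>M \<mu>)"
      using \<phi> by measurable
    have bound: "\<bar>K (fst z) (snd z) * f (snd z) * g (fst z) * \<phi> z\<bar>
        \<le> Bf * Bg * ((1 + (K (fst z) (snd z))\<^sup>2) * indicator S z)" for z
    proof (cases "z \<in> S")
      case True
      have "\<bar>k\<bar> \<le> 1 + k\<^sup>2" for k :: real
        using zero_le_power2[of "\<bar>k\<bar> - 1"] by (simp add: power2_diff)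
      then have "\<bar>K (fst z) (snd z)\<bar> * \<bar>f (snd z)\<bar> * \<bar>g (fst z)\<bar> * \<bar>\<phi> z\<bar> \<le> (1 + (K (fst z) (snd z))\<^sup>2) * Bf * Bg * 1"
        by (intro mult_mono Bf Bg \<phi>_le) (simp_all add: Bf Bg)
      then show ?thesis using True by (simp add: abs_mult algebra_simps)
    next
      case False
      then have "\<not> (snd z \<in> fsupp f \<and> fst z \<in> fsupp g)"
        by (auto simp: S_def mem_Times_iff)
      then have "f (snd z) = 0 \<or> g (fst z) = 0"
        using nonzero_in_fsupp by metis
      then show ?thesis using False by auto
    qed
    then show "AE z in \<nu> \<Otimes>\<^sub>M \<mu>. norm (K (fst z) (snd z) * f (snd z) * g (fst z) * \<phi> z)
        \<le> norm (Bf * Bg * ((1 + (K (fst z) (snd z))\<^sup>2) * indicator S z))"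
      by (intro AE_I2) (simp only: real_norm_def order_trans[OF bound abs_ge_self])
  qed
qed

lemma kernel_pairing_tendsto:
  assumes f: "test_fun f" and g: "test_fun g"
    and \<phi>: "\<And>n. \<phi> n \<in> borel_measurable (\<nu> \<Otimes>\<^sub>M \<mu>)" and \<phi>_le: "\<And>n z. \<bar>\<phi> n z\<bar> \<le> 1"
    and \<psi>: "\<psi> \<in> borel_measurable (\<nu> \<Otimes>\<^sub>M \<mu>)"
    and lim: "AE z in \<nu> \<Otimes>\<^sub>M \<mu>. (\<lambda>n. \<phi> n z) \<longlonglongrightarrow> \<psi> z"
  shows "(\<lambda>n. kernel_pairing f g (\<phi> n)) \<longlonglongrightarrow> kernel_pairing f g \<psi>"
proof (rule integral_dominated_convergence)
  have int: "integrable (\<nu> \<Otimes>\<^sub>M \<mu>) (\<lambda>z. K (fst z) (snd z) * f (snd z) * g (fst z) * 1)"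
    using f g by (rule integrable_kernel_pairing) simp_all
  then show "integrable (\<nu> \<Otimes>\<^sub>M \<mu>) (\<lambda>z. norm (K (fst z) (snd z) * f (snd z) * g (fst z) * 1))"
    by (rule integrable_norm)
  show "(\<lambda>z. K (fst z) (snd z) * f (snd z) * g (fst z) * \<phi> n z) \<in> borel_measurable (\<nu> \<Otimes>\<^sub>M \<mu>)" for n
    using integrable_kernel_pairing[OF f g \<phi> \<phi>_le] by (rule borel_measurable_integrable)
  show "(\<lambda>z. K (fst z) (snd z) * f (snd z) * g (fst z) * \<psi> z) \<in> borel_measurable (\<nu> \<Otimes>\<^sub>M \<mu>)"
    using borel_measurable_integrable[OF int] \<psi> by simp
  show "AE z in \<nu> \<Otimes>\<^sub>M \<mu>. (\<lambda>n. K (fst z) (snd z) * f (snd z) * g (fst z) * \<phi> n z)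
      \<longlonglongrightarrow> K (fst z) (snd z) * f (snd z) * g (fst z) * \<psi> z"
    using lim by eventually_elim (intro tendsto_intros)
  show "AE z in \<nu> \<Otimes>\<^sub>M \<mu>. norm (K (fst z) (snd z) * f (snd z) * g (fst z) * \<phi> n z)
      \<le> norm (K (fst z) (snd z) * f (snd z) * g (fst z) * 1)" for n
    using \<phi>_le by (intro AE_I2) (simp add: abs_mult mult_left_le)
qed

lemma abs_kernel_pairing_le_if_tendsto:
  assumes "test_fun f" "test_fun g"
    and "\<And>n. \<phi> n \<in> borel_measurable (\<nu> \<Otimes>\<^sub>M \<mu>)" "\<And>n z. \<bar>\<phi> n z\<bar> \<le> 1"
    and "\<psi> \<in> borel_measurable (\<nu> \<Otimes>\<^sub>M \<mu>)" "AE z in \<nu> \<Otimes>\<^sub>M \<mu>. (\<lambda>n. \<phi> n z) \<longlonglongrightarrow> \<psi> z"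
    and bound: "\<And>n. \<bar>kernel_pairing f g (\<phi> n)\<bar> \<le> B"
  shows "\<bar>kernel_pairing f g \<psi>\<bar> \<le> B"
  using tendsto_rabs[OF kernel_pairing_tendsto[OF assms(1-6)]]
  by (rule tendsto_le[OF trivial_limit_sequentially tendsto_const]) (intro always_eventually allI bound)

lemma borel_measurable_indicator_pair:
  assumes "A \<in> sets borel" "B \<in> sets borel"
  shows "(\<lambda>z. indicator A (snd z) * indicator B (fst z) :: real) \<in> borel_measurable (\<nu> \<Otimes>\<^sub>M \<mu>)"
proof -
  have [measurable]: "A \<in> sets \<mu>" "B \<in> sets \<nu>"
    using assms by (simp_all add: radon_sets[OF radon_\<mu>] radon_sets[OF radon_\<nu>])
  show ?thesis by measurable
qed

lemma borel_measurable_off_diagonal: "(\<lambda>z. of_bool (fst z \<noteq> snd z) :: real) \<in> borel_measurable (\<nu> \<Otimes>\<^sub>M \<mu>)"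
proof -
  have "(\<lambda>z. 1 - indicator {z::'a \<times> 'a. fst z = snd z} z :: real) \<in> borel_measurable (\<nu> \<Otimes>\<^sub>M \<mu>)"
    using sets_diagonal_pair_radon[OF radon_\<mu> radon_\<nu>]
    by (intro borel_measurable_diff borel_measurable_const borel_measurable_indicator)
  also have "(\<lambda>z. 1 - indicator {z::'a \<times> 'a. fst z = snd z} z :: real) = (\<lambda>z. of_bool (fst z \<noteq> snd z))"
    by (auto simp: indicator_def)
  finally show ?thesis .
qed

lemma borel_measurable_int_op:
  assumes "test_fun f"
  shows "int_op \<mu> K f \<in> borel_measurable \<nu>"
proof -
  have [measurable]: "f \<in> borel_measurable \<mu>"
    using borel_measurable_test_fun assms by blast
  have "(\<lambda>(s, t). K s t * f t) \<in> borel_measurable (\<nu> \<Otimes>\<^sub>M \<mu>)"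
    unfolding case_prod_beta' by measurable
  then show ?thesis
    unfolding int_op_def[abs_def] by (rule M2.borel_measurable_lebesgue_integral)
qed

lemma borel_measurable_int_op_borel: "test_fun f \<Longrightarrow> int_op \<mu> K f \<in> borel_measurable borel"
  using borel_measurable_int_op by (simp add: measurable_cong_sets[OF radon_sets[OF radon_\<nu>] refl])

lemma kernel_pairing_eq_integral_int_op:
  assumes f: "test_fun f" and g: "test_fun g"
  shows "kernel_pairing f g (\<lambda>_. 1) = (\<integral>s. int_op \<mu> K f s * g s \<partial>\<nu>)"
proof -
  have "integrable (\<nu> \<Otimes>\<^sub>M \<mu>) (\<lambda>z. K (fst z) (snd z) * f (snd z) * g (fst z) * 1)"
    using f g by (rule integrable_kernel_pairing) simp_all
  from integral_fst'[OF this] show ?thesis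
    by (simp add: int_op_def mult.assoc[symmetric] integral_mult_left_zero)
qed

lemma sum_kernel_pairing_grid_split:
  assumes f: "test_fun f" and g: "test_fun g" and I: "finite I"
    and fI: "\<And>t. f t \<noteq> 0 \<Longrightarrow> grid_cell e t \<in> I" and gI: "\<And>s. g s \<noteq> 0 \<Longrightarrow> grid_cell e s \<in> I"
  shows "(\<Sum>S\<in>Pow I. kernel_pairing f g
            (\<lambda>z. indicator (grid_cell e -` S) (snd z) * indicator (grid_cell e -` (- S)) (fst z)))
       = 2 ^ card I / 4 * kernel_pairing f g (\<lambda>z. of_bool (grid_cell e (fst z) \<noteq> grid_cell e (snd z)))"
proof -
  let ?\<psi> = "\<lambda>S z. indicator (grid_cell e -` S) (snd z) * indicator (grid_cell e -` (- S)) (fst z) :: real"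
  have int: "integrable (\<nu> \<Otimes>\<^sub>M \<mu>) (\<lambda>z. K (fst z) (snd z) * f (snd z) * g (fst z) * ?\<psi> S z)"
    if "S \<in> Pow I" for S
    using that I
    by (intro integrable_kernel_pairing[OF f g] borel_measurable_indicator_pair)
      (auto simp: indicator_def intro: sets_vimage_grid_cell borel_comp borel_finite finite_subset)
  have count: "K (fst z) (snd z) * f (snd z) * g (fst z) * (\<Sum>S\<in>Pow I. ?\<psi> S z)
      = 2 ^ card I / 4 * (K (fst z) (snd z) * f (snd z) * g (fst z) *
          of_bool (grid_cell e (fst z) \<noteq> grid_cell e (snd z)))" for z
  proof (cases "f (snd z) = 0 \<or> g (fst z) = 0")
    case False
    then show ?thesis
      using sum_indicator_vimage_Pow_split[where h = "grid_cell e", OF I fI gI] by simp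
  qed auto
  have "(\<Sum>S\<in>Pow I. kernel_pairing f g (?\<psi> S))
      = (\<integral>z. K (fst z) (snd z) * f (snd z) * g (fst z) * (\<Sum>S\<in>Pow I. ?\<psi> S z) \<partial>(\<nu> \<Otimes>\<^sub>M \<mu>))"
    using int by (simp add: Bochner_Integration.integral_sum[symmetric] sum_distrib_left)
  also have "\<dots> = 2 ^ card I / 4 * kernel_pairing f g (\<lambda>z. of_bool (grid_cell e (fst z) \<noteq> grid_cell e (snd z)))"
    by (simp only: count integral_mult_right_zero)
  finally show ?thesis .
qed

end

section \<open>Restrictedly bounded kernels\<close>

locale restr_bounded_kernel = L2_loc_kernel +
  fixes p C :: real
  assumes p: "1 < p" and C: "0 \<le> C"
    and no_common_atoms: "\<forall>x. emeasure \<mu> {x} = 0 \<or> emeasure \<nu> {x} = 0"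
    and restr_bounded: "restr_bounded p \<mu> \<nu> K C"
begin

abbreviation p' :: real where "p' \<equiv> p / (p - 1)"

lemma p'_gt_1: "1 < p'" and inverse_p_p': "1 / p + 1 / p' = 1"
  using p by (simp_all add: field_simps)

lemma kernel_pairing_separated_bound:
  assumes "test_fun f" "test_fun g" "0 < \<delta>"
    and "\<And>x y. x \<in> fsupp f \<Longrightarrow> y \<in> fsupp g \<Longrightarrow> \<delta> \<le> dist x y"
  shows "\<bar>kernel_pairing f g (\<lambda>_. 1)\<bar> \<le> C * Lp_norm \<mu> p f * Lp_norm \<nu> p' g"
proof -
  have "\<exists>\<delta>>0. \<forall>x\<in>fsupp f. \<forall>y\<in>fsupp g. \<delta> \<le> dist x y"
    using assms(3,4) by blast
  moreover have "test_fun f \<longrightarrow> test_fun g \<longrightarrow> (\<exists>\<delta>>0. \<forall>x\<in>fsupp f. \<forall>y\<in>fsupp g. \<delta> \<le> dist x y) \<longrightarrow>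
      \<bar>kernel_pairing f g (\<lambda>_. 1)\<bar> \<le> C * Lp_norm \<mu> p f * Lp_norm \<nu> p' g"
    using restr_bounded unfolding restr_bounded_def by (simp only: mult_1_right) (elim allE, assumption)
  ultimately show ?thesis
    using assms(1,2) by (simp only: simp_thms)
qed

lemma kernel_pairing_cell_core_bound:
  assumes f: "test_fun f" and g: "test_fun g" and e: "0 < e" and h: "0 < h" and S: "S \<in> sets borel"
  defines "A \<equiv> grid_cell e -` S" and "B \<equiv> grid_cell e -` (- S)" and "c \<equiv> cell_core e h"
  shows "\<bar>kernel_pairing f g (\<lambda>z. indicator (A \<inter> c) (snd z) * indicator (B \<inter> c) (fst z))\<bar>
    \<le> C * Lp_norm \<mu> p (\<lambda>t. f t * indicator A t) * Lp_norm \<nu> p' (\<lambda>s. g s * indicator B s)"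
proof -
  have [measurable]: "A \<in> sets borel" "B \<in> sets borel" "c \<in> sets borel"
    using S by (simp_all add: A_def B_def c_def sets_vimage_grid_cell)
  define fA where "fA t = f t * indicator A t" for t
  define gB where "gB s = g s * indicator B s" for s
  let ?fc = "\<lambda>t. fA t * indicator c t" and ?gc = "\<lambda>s. gB s * indicator c s"
  have tests: "test_fun fA" "test_fun gB" "test_fun ?fc" "test_fun ?gc"
    unfolding fA_def gB_def by (simp_all add: f g test_fun_mult_indicator)
  have sep: "e * h \<le> dist x y" if "x \<in> A \<inter> c" "y \<in> B \<inter> c" for x y
  proof -
    have "grid_cell e x \<noteq> grid_cell e y" using that by (auto simp: A_def B_def)
    with that show ?thesis by (intro dist_ge_cell_core[OF e]) (auto simp: c_def)
  qed
  have supp: "fsupp ?fc \<subseteq> closure (A \<inter> c)" "fsupp ?gc \<subseteq> closure (B \<inter> c)"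
    using fsupp_mult_indicator_subset
    by (simp_all add: fA_def gB_def mult.assoc indicator_inter_arith[symmetric])
  have "e * h \<le> dist x y" if "x \<in> fsupp ?fc" "y \<in> fsupp ?gc" for x y
    by (rule dist_closure_ge[of "A \<inter> c" "B \<inter> c"]) (use sep supp that in auto)
  then have "\<bar>kernel_pairing ?fc ?gc (\<lambda>_. 1)\<bar> \<le> C * Lp_norm \<mu> p ?fc * Lp_norm \<nu> p' ?gc"
    using e h tests by (intro kernel_pairing_separated_bound[of _ _ "e * h"]) auto
  also have "\<dots> \<le> C * Lp_norm \<mu> p fA * Lp_norm \<nu> p' gB"
    using p p'_gt_1 C tests
    by (intro mult_mono mult_left_mono Lp_norm_mono radon_\<mu> radon_\<nu> Lp_norm_nonneg
        mult_nonneg_nonneg) (auto simp: abs_mult indicator_def)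
  also have "kernel_pairing ?fc ?gc (\<lambda>_. 1)
      = kernel_pairing f g (\<lambda>z. indicator (A \<inter> c) (snd z) * indicator (B \<inter> c) (fst z))"
    by (simp add: fA_def gB_def indicator_inter_arith mult_ac)
  finally show ?thesis by (simp add: fA_def gB_def)
qed

lemma kernel_pairing_grid_split_bound:
  assumes f: "test_fun f" and g: "test_fun g" and e: "0 < e" and S: "S \<in> sets borel"
  defines "A \<equiv> grid_cell e -` S" and "B \<equiv> grid_cell e -` (- S)"
  shows "\<bar>kernel_pairing f g (\<lambda>z. indicator A (snd z) * indicator B (fst z))\<bar>
    \<le> C * Lp_norm \<mu> p (\<lambda>t. f t * indicator A t) * Lp_norm \<nu> p' (\<lambda>s. g s * indicator B s)"
proof (rule abs_kernel_pairing_le_if_tendsto[OF f g])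
  define c where "c n = (cell_core e (1 / real (Suc n)) :: 'a set)" for n
  have [measurable]: "A \<in> sets borel" "B \<in> sets borel" "c n \<in> sets borel" for n
    using S by (simp_all add: A_def B_def c_def sets_vimage_grid_cell)
  show "(\<lambda>z. indicator (A \<inter> c n) (snd z) * indicator (B \<inter> c n) (fst z) :: real) \<in> borel_measurable (\<nu> \<Otimes>\<^sub>M \<mu>)"
    "(\<lambda>z. indicator A (snd z) * indicator B (fst z) :: real) \<in> borel_measurable (\<nu> \<Otimes>\<^sub>M \<mu>)" for n
    by (simp_all add: borel_measurable_indicator_pair)
  show "\<bar>indicator (A \<inter> c n) (snd z) * indicator (B \<inter> c n) (fst z) :: real\<bar> \<le> 1" for n z
    by (simp add: indicator_def)
  show "\<bar>kernel_pairing f g (\<lambda>z. indicator (A \<inter> c n) (snd z) * indicator (B \<inter> c n) (fst z))\<bar>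
      \<le> C * Lp_norm \<mu> p (\<lambda>t. f t * indicator A t) * Lp_norm \<nu> p' (\<lambda>s. g s * indicator B s)" for n
    unfolding A_def B_def c_def by (rule kernel_pairing_cell_core_bound[OF f g e _ S]) simp
  have "eventually (\<lambda>n. indicator (A \<inter> c n) (snd z) * indicator (B \<inter> c n) (fst z)
      = (indicator A (snd z) * indicator B (fst z) :: real)) sequentially" for z
    using eventually_conj[OF eventually_in_cell_core[of "fst z" e] eventually_in_cell_core[of "snd z" e]]
    by (rule eventually_mono) (simp add: c_def indicator_inter_arith)
  then show "AE z in \<nu> \<Otimes>\<^sub>M \<mu>. (\<lambda>n. indicator (A \<inter> c n) (snd z) * indicator (B \<inter> c n) (fst z) :: real)
      \<longlonglongrightarrow> indicator A (snd z) * indicator B (fst z)"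
    by (intro AE_I2 tendsto_eventually)
qed

lemma kernel_pairing_off_grid_diagonal_bound:
  assumes f: "test_fun f" and g: "test_fun g" and e: "0 < e"
  shows "\<bar>kernel_pairing f g (\<lambda>z. of_bool (grid_cell e (fst z) \<noteq> grid_cell e (snd z)))\<bar>
    \<le> 2 * C * Lp_norm \<mu> p f * Lp_norm \<nu> p' g"
proof -
  define I where "I = grid_cell e ` (fsupp f \<union> fsupp g)"
  have I: "finite I"
    unfolding I_def by (rule finite_grid_cells_test_fun[OF f g])
  have fI: "grid_cell e t \<in> I" if "f t \<noteq> 0" for t
    using nonzero_in_fsupp[of f t] that by (simp add: I_def)
  have gI: "grid_cell e t \<in> I" if "g t \<noteq> 0" for t
    using nonzero_in_fsupp[of g t] that by (simp add: I_def)
  define N :: real where "N = 2 ^ card I"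
  define A where "A S = grid_cell e -` S" for S :: "'a set"
  define B where "B S = grid_cell e -` (- S)" for S :: "'a set"
  define a where "a S = Lp_norm \<mu> p (\<lambda>t. f t * indicator (A S) t)" for S
  define b where "b S = Lp_norm \<nu> p' (\<lambda>s. g s * indicator (B S) s)" for S
  have split: "(\<Sum>S\<in>Pow I. kernel_pairing f g (\<lambda>z. indicator (A S) (snd z) * indicator (B S) (fst z)))
      = N / 4 * kernel_pairing f g (\<lambda>z. of_bool (grid_cell e (fst z) \<noteq> grid_cell e (snd z)))"
    unfolding A_def B_def N_def by (rule sum_kernel_pairing_grid_split[OF f g I fI gI])
  have sum_a: "(\<Sum>S\<in>Pow I. a S powr p) = N / 2 * (LINT t|\<mu>. \<bar>f t\<bar> powr p)"
    unfolding a_def A_def N_def using p by (intro sum_Lp_norm_powr_grid_split(1)[OF radon_\<mu> f _ I fI]) simp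
  have sum_b: "(\<Sum>S\<in>Pow I. b S powr p') = N / 2 * (LINT s|\<nu>. \<bar>g s\<bar> powr p')"
    unfolding b_def B_def N_def using p'_gt_1 by (intro sum_Lp_norm_powr_grid_split(2)[OF radon_\<nu> g _ I gI]) simp
  have "N / 4 * \<bar>kernel_pairing f g (\<lambda>z. of_bool (grid_cell e (fst z) \<noteq> grid_cell e (snd z)))\<bar>
      = \<bar>\<Sum>S\<in>Pow I. kernel_pairing f g (\<lambda>z. indicator (A S) (snd z) * indicator (B S) (fst z))\<bar>"
    unfolding split by (simp add: abs_mult N_def)
  also have "\<dots> \<le> (\<Sum>S\<in>Pow I. C * (a S * b S))"
  proof (rule order_trans[OF sum_abs sum_mono])
    fix S assume "S \<in> Pow I"
    with I have "S \<in> sets borel"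
      by (auto intro: borel_finite finite_subset)
    from kernel_pairing_grid_split_bound[OF f g e this]
    show "\<bar>kernel_pairing f g (\<lambda>z. indicator (A S) (snd z) * indicator (B S) (fst z))\<bar> \<le> C * (a S * b S)"
      by (simp add: A_def B_def a_def b_def mult_ac)
  qed
  also have "\<dots> \<le> C * ((\<Sum>S\<in>Pow I. a S powr p) powr (1/p) * (\<Sum>S\<in>Pow I. b S powr p') powr (1/p'))"
    unfolding sum_distrib_left[symmetric] using I p p'_gt_1 inverse_p_p' C
    by (intro mult_left_mono Holder_inequality_sum) (simp_all add: a_def b_def Lp_norm_nonneg)
  also have "\<dots> = C * ((N / 2 * (LINT t|\<mu>. \<bar>f t\<bar> powr p)) powr (1/p) *
      (N / 2 * (LINT s|\<nu>. \<bar>g s\<bar> powr p')) powr (1/p'))"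
    unfolding sum_a sum_b ..
  also have "\<dots> = C * (N / 2 * (Lp_norm \<mu> p f * Lp_norm \<nu> p' g))"
    unfolding Lp_norm_def
    by (subst powr_conjugate_mult[OF _ _ _ inverse_p_p']) (simp_all add: N_def integral_nonneg_AE)
  finally show ?thesis
    by (simp add: N_def field_simps)
qed

lemma kernel_pairing_off_diagonal:
  assumes f: "test_fun f" and g: "test_fun g"
  shows "kernel_pairing f g (\<lambda>z. of_bool (fst z \<noteq> snd z)) = kernel_pairing f g (\<lambda>_. 1)"
proof (rule integral_cong_AE)
  show "(\<lambda>z. K (fst z) (snd z) * f (snd z) * g (fst z) * of_bool (fst z \<noteq> snd z)) \<in> borel_measurable (\<nu> \<Otimes>\<^sub>M \<mu>)"
    "(\<lambda>z. K (fst z) (snd z) * f (snd z) * g (fst z) * 1) \<in> borel_measurable (\<nu> \<Otimes>\<^sub>M \<mu>)"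
    by (rule borel_measurable_integrable, rule integrable_kernel_pairing[OF f g];
        simp add: borel_measurable_off_diagonal)+
  have "AE z in \<nu> \<Otimes>\<^sub>M \<mu>. fst z \<noteq> snd z"
    by (rule AE_I'[OF diagonal_null_sets_pair_radon[OF radon_\<mu> radon_\<nu> no_common_atoms]]) auto
  then show "AE z in \<nu> \<Otimes>\<^sub>M \<mu>. K (fst z) (snd z) * f (snd z) * g (fst z) * of_bool (fst z \<noteq> snd z)
      = K (fst z) (snd z) * f (snd z) * g (fst z) * 1"
    by eventually_elim simp
qed

lemma kernel_pairing_bound:
  assumes f: "test_fun f" and g: "test_fun g"
  shows "\<bar>kernel_pairing f g (\<lambda>_. 1)\<bar> \<le> 2 * C * Lp_norm \<mu> p f * Lp_norm \<nu> p' g"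
  unfolding kernel_pairing_off_diagonal[OF f g, symmetric]
proof (rule abs_kernel_pairing_le_if_tendsto[OF f g])
  let ?e = "\<lambda>n. 1 / real (Suc n)"
  have [measurable]: "grid_cell e \<in> borel_measurable \<mu>" "grid_cell e \<in> borel_measurable \<nu>" for e
    by (simp_all add: borel_measurable_radon radon_\<mu> radon_\<nu>)
  show "(\<lambda>z. of_bool (grid_cell (?e n) (fst z) \<noteq> grid_cell (?e n) (snd z)) :: real)
      \<in> borel_measurable (\<nu> \<Otimes>\<^sub>M \<mu>)" for n
    by measurable
  show "\<bar>kernel_pairing f g (\<lambda>z. of_bool (grid_cell (?e n) (fst z) \<noteq> grid_cell (?e n) (snd z)))\<bar>
      \<le> 2 * C * Lp_norm \<mu> p f * Lp_norm \<nu> p' g" for n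
    using kernel_pairing_off_grid_diagonal_bound[OF f g] by simp
  have lim: "(\<lambda>n. of_bool (grid_cell (?e n) (fst z) \<noteq> grid_cell (?e n) (snd z)) :: real)
      \<longlonglongrightarrow> of_bool (fst z \<noteq> snd z)" for z
  proof (cases "fst z = snd z")
    case False
    then show ?thesis
      by (intro tendsto_eventually eventually_mono[OF eventually_grid_cell_neq[OF False]]) simp
  qed simp
  then show "AE z in \<nu> \<Otimes>\<^sub>M \<mu>. (\<lambda>n. of_bool (grid_cell (?e n) (fst z) \<noteq> grid_cell (?e n) (snd z)) :: real)
      \<longlonglongrightarrow> of_bool (fst z \<noteq> snd z)"
    by (intro AE_I2 lim)
qed (simp_all add: borel_measurable_off_diagonal)

text \<open>Duality: test \<open>T f\<close> against \<open>g = sgn (T f) \<bar>T f\<bar>\<^bsup>p-1\<^esup>\<close> on a bounded set where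
  \<open>T f\<close> is bounded, so that \<open>g\<close> is an admissible test function.\<close>
lemma integral_int_op_powr_bounded_set_le:
  assumes f: "test_fun f" and E: "E \<in> sets borel" "bounded E"
    and T_le: "\<And>s. s \<in> E \<Longrightarrow> \<bar>int_op \<mu> K f s\<bar> \<le> M"
  shows "(LINT s|\<nu>. \<bar>int_op \<mu> K f s\<bar> powr p * indicator E s) \<le> (2 * C * Lp_norm \<mu> p f) powr p"
proof -
  define T where "T = int_op \<mu> K f"
  define J where "J = (LINT s|\<nu>. \<bar>T s\<bar> powr p * indicator E s)"
  define g where "g s = sgn (T s) * \<bar>T s\<bar> powr (p - 1) * indicator E s" for s
  have [measurable]: "T \<in> borel_measurable borel"
    unfolding T_def by (rule borel_measurable_int_op_borel[OF f])
  have "\<bar>sgn (T s) * \<bar>T s\<bar> powr (p - 1)\<bar> \<le> \<bar>M\<bar> powr (p - 1)" if "s \<in> E" for s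
    using T_le[OF that] p by (auto simp: T_def abs_mult abs_sgn_eq intro: powr_mono2)
  with E have g: "test_fun g"
    unfolding g_def by (intro test_fun_mult_indicator_bounded) auto
  have g_powr: "\<bar>g s\<bar> powr p' = \<bar>T s\<bar> powr p * indicator E s" for s
    using p by (auto simp: g_def abs_mult powr_powr indicator_def)
  have "T s * g s = \<bar>T s\<bar> powr p * indicator E s" for s
    using mult_sgn_abs_powr[of "T s" p] by (simp add: g_def mult_ac)
  then have "J = kernel_pairing f g (\<lambda>_. 1)"
    unfolding kernel_pairing_eq_integral_int_op[OF f g] J_def T_def by simp
  also have "\<dots> \<le> 2 * C * Lp_norm \<mu> p f * Lp_norm \<nu> p' g"
    using kernel_pairing_bound[OF f g] by simp
  also have "Lp_norm \<nu> p' g = J powr (1 / p')"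
    unfolding Lp_norm_def g_powr J_def ..
  finally have "J \<le> 2 * C * Lp_norm \<mu> p f * J powr (1 / p')" .
  with integral_nonneg_AE have "J \<le> (2 * C * Lp_norm \<mu> p f) powr p"
    unfolding J_def by (intro le_powr_if_le_mult_powr[OF p inverse_p_p']) auto
  then show ?thesis
    unfolding J_def T_def .
qed

lemma nn_integral_int_op_powr_bounded_set_le:
  assumes f: "test_fun f" and E: "E \<in> sets borel" "bounded E"
    and T_le: "\<And>s. s \<in> E \<Longrightarrow> \<bar>int_op \<mu> K f s\<bar> \<le> M"
  shows "(\<integral>\<^sup>+ s. ennreal (\<bar>int_op \<mu> K f s\<bar> powr p) * indicator E s \<partial>\<nu>)
    \<le> ennreal ((2 * C * Lp_norm \<mu> p f) powr p)"
proof -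
  define T where "T = int_op \<mu> K f"
  have T_meas: "T \<in> borel_measurable borel"
    unfolding T_def by (rule borel_measurable_int_op_borel[OF f])
  have "test_fun (\<lambda>s. T s * indicator E s)"
    using T_le by (intro test_fun_mult_indicator_bounded[OF T_meas E]) (simp add: T_def)
  from integrable_test_fun_powr[OF radon_\<nu> this, of p] p
  have "integrable \<nu> (\<lambda>s. \<bar>T s * indicator E s\<bar> powr p)"
    by simp
  also have "(\<lambda>s. \<bar>T s * indicator E s\<bar> powr p) = (\<lambda>s. \<bar>T s\<bar> powr p * indicator E s)"
    using p by (auto simp: indicator_def)
  finally have "(\<integral>\<^sup>+ s. ennreal (\<bar>T s\<bar> powr p) * indicator E s \<partial>\<nu>)
      = ennreal (LINT s|\<nu>. \<bar>T s\<bar> powr p * indicator E s)"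
    by (simp add: nn_integral_eq_integral[symmetric] indicator_mult_ennreal mult.commute)
  also have "\<dots> \<le> ennreal ((2 * C * Lp_norm \<mu> p f) powr p)"
    using integral_int_op_powr_bounded_set_le[OF f E T_le] by (simp add: T_def)
  finally show ?thesis unfolding T_def .
qed

lemma nn_integral_int_op_powr_le:
  assumes f: "test_fun f"
  shows "(\<integral>\<^sup>+ s. ennreal (\<bar>int_op \<mu> K f s\<bar> powr p) \<partial>\<nu>)
    \<le> ennreal ((2 * C) powr p) * (\<integral>\<^sup>+ t. ennreal (\<bar>f t\<bar> powr p) \<partial>\<mu>)"
proof -
  define T where "T = int_op \<mu> K f"
  define E where "E n = {s \<in> cball 0 (real n). \<bar>T s\<bar> \<le> real n}" for n :: nat
  have [measurable]: "T \<in> borel_measurable borel" "T \<in> borel_measurable \<nu>"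
    unfolding T_def by (rule borel_measurable_int_op_borel[OF f] borel_measurable_int_op[OF f])+
  have E: "E n \<in> sets borel" "bounded (E n)" for n
    by (simp add: E_def) (rule bounded_subset[OF bounded_cball[of 0 "real n"]], auto simp: E_def)
  have "(\<integral>\<^sup>+ s. ennreal (\<bar>T s\<bar> powr p) \<partial>\<nu>) \<le> ennreal ((2 * C * Lp_norm \<mu> p f) powr p)"
  proof (rule nn_integral_le_if_truncations_le)
    show "incseq E"
      by (intro monoI) (auto simp: E_def)
    show "\<exists>n. s \<in> E n" for s
      using real_arch_simple[of "max (norm s) \<bar>T s\<bar>"] by (auto simp: E_def)
    show "(\<integral>\<^sup>+ s. ennreal (\<bar>T s\<bar> powr p) * indicator (E n) s \<partial>\<nu>) \<le> ennreal ((2 * C * Lp_norm \<mu> p f) powr p)"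
      for n
      unfolding T_def by (rule nn_integral_int_op_powr_bounded_set_le[OF f E, where M = "real n"])
        (simp add: E_def T_def)
  qed (simp_all add: radon_sets[OF radon_\<nu>] E)
  also have "\<dots> = ennreal ((2 * C) powr p) * (\<integral>\<^sup>+ t. ennreal (\<bar>f t\<bar> powr p) \<partial>\<mu>)"
    using p integrable_test_fun_powr[OF radon_\<mu> f, of p] C
    by (simp add: powr_mult Lp_norm_powr nn_integral_eq_integral integral_nonneg_AE ennreal_mult)
  finally show ?thesis unfolding T_def .
qed

end

theorem theorem3p4:
  fixes \<mu> \<nu> :: "'a::euclidean_space measure"
    and K :: "'a \<Rightarrow> 'a \<Rightarrow> real" and p C :: real
  assumes "1 < p" and "0 \<le> C"
    and "radon \<mu>" and "radon \<nu>"
    and "\<forall>x. emeasure \<mu> {x} = 0 \<or> emeasure \<nu> {x} = 0"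
    and "L2_loc \<nu> \<mu> K"
    and "restr_bounded p \<mu> \<nu> K C"
  shows "\<forall>f. test_fun f \<longrightarrow>
           int_op \<mu> K f \<in> borel_measurable \<nu> \<and>
           (\<integral>\<^sup>+ s. ennreal (\<bar>int_op \<mu> K f s\<bar> powr p) \<partial>\<nu>)
             \<le> ennreal ((2 * C) powr p) * (\<integral>\<^sup>+ t. ennreal (\<bar>f t\<bar> powr p) \<partial>\<mu>)"
proof -
  interpret restr_bounded_kernel \<mu> \<nu> K p C
    using assms by unfold_locales
  show ?thesis
    using borel_measurable_int_op nn_integral_int_op_powr_le by blast
qed

end
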